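(* Let $\sigma\in\Sigma$, $K=[-q\mathbf 1,q\mathbf 1]$ a compact cube, $\varepsilon>0$ and $0<t<\infty$. Then there is a deterministic compact cube $L\subseteq\mathbb R^d$ such that $$P^\sigma\{S_K(\sigma(s))\subseteq L\text{ for all }s\in[0,t]\}\ge1-\varepsilon.$$
   Context: Order: for $x,y\in\mathbb R^d$, $x\le y$ iff $x_i\le y_i$ for all $i$; $\mathbf 1=(1,\dots,1)$; $|x|_\infty=\max_i|x_i|$; $d\ge2$. $\mathbb Z^*=\mathbb Z\cup\{\pm\infty\}$. The state space $\Sigma$ is the set of functions $\sigma:\mathbb R^d\to\mathbb Z^*$ such that (i) $x\le y$ implies $\sigma(x)\le\sigma(y)$; (ii) for every cube $[-q\mathbf 1,q\mathbf 1]$ there are finite partitions $-q=s_i^0<\dots<s_i^{m_i}=q$ of each coordinate axis such that $\sigma$ is constant on each rectangle $\prod_i[s_i^{k_i},s_i^{k_i+1})$; (iii) for every $b\in\mathbb R^d$, $\lim_{M\to\infty}\sup\{|y|_\infty^{-d/(d+1)}\sigma(y):y\le b,|y|_\infty\ge M\}=-\infty$. Dynamics: a rate-one Poisson point process on $\mathbb R^d\times(0,\infty)$; $\mathbf H((y,0),(x,t))$ is the maximal number of Poisson points on a strictly increasing chain (coordinatewise order in $\mathbb R^{d+1}$) in $\{(\eta,s):y<\eta\le x,0<s\le t\}$; from $\sigma$, $\sigma(x,0)=\sigma(x)$, $\sigma(x,t)=\sup_{y\le x}\{\sigma(y)+\mathbf H((y,0),(x,t))\}$, $\sigma(s)=\sigma(\cdot,s)$,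 with law $P^\sigma$. For $\rho\in\Sigma$, $x\in\mathbb R^d$: $S_x(\rho)=\{y:y\le x,\ \rho(y)=\rho(x)\}$ if $\rho(x)$ finite, $S_x(\rho)=\emptyset$ if $\rho(x)=\pm\infty$; $S_K(\rho)=\bigcup_{x\in K}S_x(\rho)$. *)

theory Defs
  imports "HOL-Analysis.Analysis" "HOL-Probability.Probability"
begin

text \<open>Points of R^d are vectors of type real^'n, d = CARD('n).
  Values in Z* = Z \<union> {+-infinity} are represented in ereal.\<close>

definition linf :: "real^'n \<Rightarrow> real" where
  "linf y = Max (range (\<lambda>i. \<bar>y $ i\<bar>))"

definition is_zstar :: "ereal \<Rightarrow> bool" where
  "is_zstar v \<longleftrightarrow> v = \<infinity> \<or> v = -\<infinity> \<or> (\<exists>k::int. v = ereal (of_int k))"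

definition in_Sigma :: "(real^'n \<Rightarrow> ereal) \<Rightarrow> bool" where
  "in_Sigma \<sigma> \<longleftrightarrow>
     (\<forall>x. is_zstar (\<sigma> x)) \<and>
     (\<forall>x y. x \<le> y \<longrightarrow> \<sigma> x \<le> \<sigma> y) \<and>
     (\<forall>q::real. q > 0 \<longrightarrow>
        (\<exists>(s :: 'n \<Rightarrow> nat \<Rightarrow> real) (m :: 'n \<Rightarrow> nat).
           (\<forall>i. s i 0 = -q \<and> s i (m i) = q \<and> (\<forall>k < m i. s i k < s i (Suc k))) \<and>
           (\<forall>kk :: 'n \<Rightarrow> nat. (\<forall>i. kk i < m i) \<longrightarrow>
              (\<forall>x y. (\<forall>i. s i (kk i) \<le> x $ i \<and> x $ i < s i (Suc (kk i))) \<longrightarrow>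
                     (\<forall>i. s i (kk i) \<le> y $ i \<and> y $ i < s i (Suc (kk i))) \<longrightarrow>
                     \<sigma> x = \<sigma> y)))) \<and>
     (\<forall>b::real^'n.
        ((\<lambda>M::real. SUP y \<in> {y. y \<le> b \<and> linf y \<ge> M}.
              ereal (linf y powr (- real CARD('n) / (real CARD('n) + 1))) * \<sigma> y)
          \<longlongrightarrow> -\<infinity>) at_top)"

definition vlt :: "real^'n \<Rightarrow> real^'n \<Rightarrow> bool" where
  "vlt x y \<longleftrightarrow> (\<forall>i. x $ i < y $ i)"

definition st_less :: "((real^'n) \<times> real) \<Rightarrow> ((real^'n) \<times> real) \<Rightarrow> bool" where
  "st_less p p' \<longleftrightarrow> vlt (fst p) (fst p') \<and> snd p < snd p'"

text \<open>H((y,0),(x,t)) for a point configuration P: maximal number of points of P on a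
  strictly increasing chain in {(eta,s). y < eta \<le> x, 0 < s \<le> t}.\<close>
definition chainH :: "((real^'n) \<times> real) set \<Rightarrow> real^'n \<Rightarrow> real^'n \<Rightarrow> real \<Rightarrow> ereal" where
  "chainH P y x t =
     (SUP c \<in> {c. set c \<subseteq> P \<inter> {(\<eta>, s). vlt y \<eta> \<and> \<eta> \<le> x \<and> 0 < s \<and> s \<le> t}
                 \<and> sorted_wrt st_less c}. ereal (real (length c)))"

definition evolve :: "(real^'n \<Rightarrow> ereal) \<Rightarrow> ((real^'n) \<times> real) set \<Rightarrow> real \<Rightarrow> real^'n \<Rightarrow> ereal" where
  "evolve \<sigma> P t x = (if t = 0 then \<sigma> x else (SUP y \<in> {y. y \<le> x}. \<sigma> y + chainH P y x t))"

definition S_pt :: "(real^'n \<Rightarrow> ereal) \<Rightarrow> real^'n \<Rightarrow> (real^'n) set" where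
  "S_pt \<rho> x = (if \<rho> x = \<infinity> \<or> \<rho> x = -\<infinity> then {} else {y. y \<le> x \<and> \<rho> y = \<rho> x})"

definition S_set :: "(real^'n \<Rightarrow> ereal) \<Rightarrow> (real^'n) set \<Rightarrow> (real^'n) set" where
  "S_set \<rho> K = (\<Union>x\<in>K. S_pt \<rho> x)"

definition poisson_pp :: "'a measure \<Rightarrow> ('a \<Rightarrow> ((real^'n) \<times> real) set) \<Rightarrow> bool" where
  "poisson_pp M N \<longleftrightarrow> prob_space M \<and>
     (\<forall>\<omega>\<in>space M. N \<omega> \<subseteq> UNIV \<times> {0<..} \<and> (\<forall>B. bounded B \<longrightarrow> finite (N \<omega> \<inter> B))) \<and>
     (\<forall>B. B \<in> sets lborel \<and> bounded B \<and> B \<subseteq> UNIV \<times> {0<..} \<longrightarrow>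
        (\<lambda>\<omega>. card (N \<omega> \<inter> B)) \<in> measurable M (count_space UNIV) \<and>
        (\<forall>k. measure M {\<omega>\<in>space M. card (N \<omega> \<inter> B) = k}
               = exp (- measure lborel B) * measure lborel B ^ k / fact k)) \<and>
     (\<forall>(I :: nat set) Bs. finite I \<and> disjoint_family_on Bs I \<and>
        (\<forall>i\<in>I. Bs i \<in> sets lborel \<and> bounded (Bs i) \<and> Bs i \<subseteq> UNIV \<times> {0<..}) \<longrightarrow>
        prob_space.indep_vars M (\<lambda>_. count_space UNIV) (\<lambda>i \<omega>. card (N \<omega> \<inter> Bs i)) I)"

end

theory Submission
  imports Defs
begin

text \<open>Write \<open>H(y)\<close> for the number of Poisson points on the longest increasing chain from
  \<open>(y, 0)\<close> to \<open>(q 1, t)\<close>. At scale \<open>m\<close>, cut the box between \<open>-m^(d+1) 1\<close> and \<open>q 1\<close>, times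
  \<open>(0, t]\<close>, into \<open>m^d\<close> slabs in every space-time direction. An increasing chain stays in the
  cells along one monotone lattice path; there are at most \<open>(2(d+1))^((d+1) m^d)\<close> such paths,
  each covering a region of volume \<open>O(m^d)\<close>, so the Poisson tail and a union bound give
  \<open>H(-m^(d+1) 1) \<le> c m^d\<close> outside an event of probability \<open>2^-m\<close>. Summing over \<open>m\<close>, with
  probability at least \<open>1 - \<epsilon>\<close> we get \<open>H(z) = O(linf z ^ (d/(d+1)))\<close> for all far \<open>z\<close>. The
  decay condition on \<open>\<sigma>\<close> gives \<open>\<sigma>(z) \<le> -C linf z ^ (d/(d+1))\<close> for every \<open>C\<close>, so the
  variational formula assigns to points far below \<open>K\<close> heights smaller than the minimum of
  \<open>\<sigma>\<close> on \<open>K\<close>, and they cannot share a level with a point of \<open>K\<close>.\<close>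

section \<open>Poisson tail estimates\<close>

lemma poisson_cdf_tail_le:
  fixes \<mu> :: real
  assumes "\<mu> \<ge> 0"
  shows "1 - exp (-\<mu>) * (\<Sum>j<k. \<mu>^j / fact j) \<le> \<mu>^k / fact k"
proof -
  obtain s where s: "\<bar>s\<bar> \<le> \<bar>\<mu>\<bar>" "exp \<mu> = (\<Sum>j<k. \<mu>^j / fact j) + exp s / fact k * \<mu>^k"
    using Maclaurin_exp_le[of \<mu> k] by blast
  have "exp (-\<mu>) * (\<Sum>j<k. \<mu>^j / fact j) = exp (-\<mu>) * (exp \<mu> - exp s / fact k * \<mu>^k)"
    using s(2) by simp
  also have "\<dots> = 1 - exp (-\<mu>) * exp s * (\<mu>^k / fact k)"
    by (simp add: algebra_simps exp_minus_inverse)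
  finally have eq: "exp (-\<mu>) * (\<Sum>j<k. \<mu>^j / fact j) = 1 - exp (-\<mu>) * exp s * (\<mu>^k / fact k)" .
  have "exp (-\<mu>) * exp s \<le> 1"
    using s(1) assms by (simp add: exp_minus field_simps)
  then have "exp (-\<mu>) * exp s * (\<mu>^k / fact k) \<le> \<mu>^k / fact k"
    using assms by (intro mult_left_le_one_le) auto
  with eq show ?thesis by linarith
qed

lemma power_le_exp_mult_fact: "real k ^ k \<le> exp (real k) * fact k"
proof -
  obtain s where s: "exp (real k) = (\<Sum>j<Suc k. real k^j / fact j) + exp s / fact (Suc k) * real k ^ Suc k"
    using Maclaurin_exp_le[of "real k" "Suc k"] by blast
  have "real k ^ k / fact k \<le> (\<Sum>j<Suc k. real k^j / fact j)"
    by (rule member_le_sum) auto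
  also have "\<dots> \<le> exp (real k)"
    using s by (simp add: zero_le_mult_iff)
  finally show ?thesis by (simp add: divide_le_eq mult.commute)
qed

lemma power_div_fact_le:
  assumes "\<mu> \<ge> 0" "k \<ge> 1"
  shows "\<mu>^k / fact k \<le> (exp 1 * \<mu> / real k)^k"
proof -
  have "\<mu>^k / fact k = \<mu>^k * real k^k / (real k ^ k * fact k)"
    using assms by simp
  also have "\<dots> \<le> \<mu>^k * (exp (real k) * fact k) / (real k ^ k * fact k)"
    using power_le_exp_mult_fact[of k] assms by (intro divide_right_mono mult_left_mono) auto
  also have "\<dots> = (exp 1 * \<mu> / real k)^k"
    by (simp add: power_divide power_mult_distrib exp_of_nat_mult[symmetric])
  finally show ?thesis .
qed

lemma power_div_fact_le_half_power:
  fixes \<mu> :: real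
  assumes "\<mu> \<ge> 0" "k \<ge> 1" "2 * exp 1 * \<mu> \<le> real k"
  shows "\<mu>^k / fact k \<le> (1/2)^k"
proof -
  have "\<mu>^k / fact k \<le> (exp 1 * \<mu> / real k)^k"
    by (rule power_div_fact_le[OF assms(1,2)])
  also have "\<dots> \<le> (1/2)^k"
    using assms by (intro power_mono) (auto simp: divide_le_eq)
  finally show ?thesis .
qed

lemma poisson_pp_prob_space: "poisson_pp M N \<Longrightarrow> prob_space M"
  by (simp add: poisson_pp_def)

lemma poisson_pp_locally_finite:
  "poisson_pp M N \<Longrightarrow> \<omega> \<in> space M \<Longrightarrow> bounded B \<Longrightarrow> finite (N \<omega> \<inter> B)"
  by (simp add: poisson_pp_def)

lemma poisson_pp_count_event:
  assumes "poisson_pp M N" "B \<in> sets lborel" "bounded B" "B \<subseteq> UNIV \<times> {0<..}"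
  shows "{\<omega>\<in>space M. Q (card (N \<omega> \<inter> B))} \<in> sets M"
proof -
  have "(\<lambda>\<omega>. card (N \<omega> \<inter> B)) \<in> measurable M (count_space UNIV)"
    using assms unfolding poisson_pp_def by blast
  then have "(\<lambda>\<omega>. card (N \<omega> \<inter> B)) -` {n. Q n} \<inter> space M \<in> sets M"
    by (rule measurable_sets) simp
  moreover have "(\<lambda>\<omega>. card (N \<omega> \<inter> B)) -` {n. Q n} \<inter> space M = {\<omega>\<in>space M. Q (card (N \<omega> \<inter> B))}"
    by auto
  ultimately show ?thesis by simp
qed

lemma poisson_pp_count_tail:
  assumes pp: "poisson_pp M N" and B: "B \<in> sets lborel" "bounded B" "B \<subseteq> UNIV \<times> {0<..}"
    and vol: "measure lborel B \<le> \<mu>"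
  shows "measure M {\<omega>\<in>space M. k \<le> card (N \<omega> \<inter> B)} \<le> \<mu>^k / fact k"
proof -
  interpret prob_space M using pp by (rule poisson_pp_prob_space)
  let ?X = "\<lambda>\<omega>. card (N \<omega> \<inter> B)" and ?v = "measure lborel B"
  have pmf: "prob {\<omega>\<in>space M. ?X \<omega> = j} = exp (- ?v) * ?v ^ j / fact j" for j
    using pp B unfolding poisson_pp_def by blast
  have ev: "{\<omega>\<in>space M. ?X \<omega> = j} \<in> events" for j
    using poisson_pp_count_event[OF pp B] .
  have "prob (\<Union>j<k. {\<omega>\<in>space M. ?X \<omega> = j}) = (\<Sum>j<k. prob {\<omega>\<in>space M. ?X \<omega> = j})"
    using ev by (intro finite_measure_finite_Union) (auto simp: disjoint_family_on_def)
  then have "prob (\<Union>j<k. {\<omega>\<in>space M. ?X \<omega> = j}) = exp (- ?v) * (\<Sum>j<k. ?v^j / fact j)"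
    by (simp add: pmf sum_distrib_left)
  moreover have "{\<omega>\<in>space M. k \<le> ?X \<omega>} = space M - (\<Union>j<k. {\<omega>\<in>space M. ?X \<omega> = j})"
    by auto
  ultimately have "prob {\<omega>\<in>space M. k \<le> ?X \<omega>} = 1 - exp (- ?v) * (\<Sum>j<k. ?v^j / fact j)"
    using ev by (simp add: prob_compl sets.finite_UN)
  also have "\<dots> \<le> ?v^k / fact k"
    by (rule poisson_cdf_tail_le) simp
  also have "\<dots> \<le> \<mu>^k / fact k"
    using vol by (intro divide_right_mono power_mono) auto
  finally show ?thesis .
qed

section \<open>Space-time grid\<close>

text \<open>Space-time coordinates are indexed by \<^typ>\<open>'n option\<close>, with \<^term>\<open>None\<close> the time
  direction.\<close>

definition st_coord :: "real \<Rightarrow> (real^'n) \<times> real \<Rightarrow> 'n option \<Rightarrow> real" where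
  "st_coord a p d = (case d of Some i \<Rightarrow> fst p $ i - a | None \<Rightarrow> snd p)"

definition mesh :: "real \<Rightarrow> real \<Rightarrow> 'n option \<Rightarrow> real" where
  "mesh h \<tau> d = (case d of Some _ \<Rightarrow> h | None \<Rightarrow> \<tau>)"

definition cell :: "real \<Rightarrow> real \<Rightarrow> real \<Rightarrow> ('n option \<Rightarrow> nat) \<Rightarrow> ((real^'n) \<times> real) set" where
  "cell a h \<tau> k = {p. \<forall>d. real (k d) * mesh h \<tau> d < st_coord a p d \<and>
                          st_coord a p d \<le> (real (k d) + 1) * mesh h \<tau> d}"

definition cell_index :: "real \<Rightarrow> real \<Rightarrow> real \<Rightarrow> (real^'n) \<times> real \<Rightarrow> 'n option \<Rightarrow> nat" where
  "cell_index a h \<tau> p d = nat (\<lceil>st_coord a p d / mesh h \<tau> d\<rceil> - 1)"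

lemma cell_eq:
  "cell a h \<tau> k = {p. (\<forall>i. real (k (Some i)) * h < fst p $ i - a \<and> fst p $ i - a \<le> (real (k (Some i)) + 1) * h)
     \<and> real (k None) * \<tau> < snd p \<and> snd p \<le> (real (k None) + 1) * \<tau>}"
  unfolding cell_def st_coord_def mesh_def by (auto split: option.splits)

lemma cell_sets: "cell a h \<tau> (k :: 'n::finite option \<Rightarrow> nat) \<in> sets lborel"
proof -
  have eq: "cell a h \<tau> k =
      (\<Inter>i. {p. real (k (Some i)) * h + a < fst p $ i} \<inter> {p. fst p $ i \<le> (real (k (Some i)) + 1) * h + a})
      \<inter> {p. real (k None) * \<tau> < snd p} \<inter> {p. snd p \<le> (real (k None) + 1) * \<tau>}"
    unfolding cell_eq by (auto simp: algebra_simps)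
  have "{p::(real^'n) \<times> real. c < fst p $ i} \<in> sets borel"
    and "{p::(real^'n) \<times> real. fst p $ i \<le> c} \<in> sets borel"
    and "{p::(real^'n) \<times> real. c < snd p} \<in> sets borel"
    and "{p::(real^'n) \<times> real. snd p \<le> c} \<in> sets borel" for c i
    by (intro borel_open borel_closed open_Collect_less closed_Collect_le continuous_intros)+
  then show ?thesis
    unfolding eq sets_lborel by (intro sets.Int sets.finite_INT) auto
qed

lemma cell_subset_cbox:
  "cell a h \<tau> k \<subseteq> cbox ((\<chi> i. a + real (k (Some i)) * h), real (k None) * \<tau>)
                        ((\<chi> i. a + (real (k (Some i)) + 1) * h), (real (k None) + 1) * \<tau>)"
proof
  fix p assume "p \<in> cell a h \<tau> k"
  then have space: "\<And>i. real (k (Some i)) * h < fst p $ i - a \<and> fst p $ i - a \<le> (real (k (Some i)) + 1) * h"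
    and time: "real (k None) * \<tau> < snd p" "snd p \<le> (real (k None) + 1) * \<tau>"
    unfolding cell_eq by auto
  have "fst p \<in> cbox (\<chi> i. a + real (k (Some i)) * h) (\<chi> i. a + (real (k (Some i)) + 1) * h)"
    unfolding mem_box_cart vec_lambda_beta
  proof (intro allI conjI)
    fix i
    show "a + real (k (Some i)) * h \<le> fst p $ i" "fst p $ i \<le> a + (real (k (Some i)) + 1) * h"
      using space[of i] by linarith+
  qed
  moreover have "snd p \<in> cbox (real (k None) * \<tau>) ((real (k None) + 1) * \<tau>)"
    using time by simp
  ultimately show "p \<in> cbox ((\<chi> i. a + real (k (Some i)) * h), real (k None) * \<tau>)
                        ((\<chi> i. a + (real (k (Some i)) + 1) * h), (real (k None) + 1) * \<tau>)"
    unfolding cbox_Pair_eq by (cases p) auto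
qed

lemma cell_bounded: "bounded (cell a h \<tau> k)"
  by (rule bounded_subset[OF bounded_cbox cell_subset_cbox])

lemma cell_subset_upper_half:
  assumes "\<tau> > 0"
  shows "cell a h \<tau> k \<subseteq> UNIV \<times> {0<..}"
proof
  fix p assume "p \<in> cell a h \<tau> k"
  then have "real (k None) * \<tau> < snd p" unfolding cell_eq by auto
  moreover have "0 \<le> real (k None) * \<tau>" using assms by simp
  ultimately show "p \<in> UNIV \<times> {0<..}" by (cases p) auto
qed

lemma measure_cell_le:
  fixes k :: "'n::finite option \<Rightarrow> nat"
  assumes "h \<ge> 0" "\<tau> \<ge> 0"
  shows "measure lborel (cell a h \<tau> k) \<le> h ^ CARD('n) * \<tau>"
proof -
  let ?lo = "\<chi> i. a + real (k (Some i)) * h" and ?hi = "\<chi> i. a + (real (k (Some i)) + 1) * h"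
  have "measure lborel (cell a h \<tau> k) \<le>
      measure lborel (cbox (?lo, real (k None) * \<tau>) (?hi, (real (k None) + 1) * \<tau>))"
    by (intro measure_mono_fmeasurable cell_subset_cbox cell_sets)
       (auto intro!: fmeasurableI emeasure_bounded_finite bounded_cbox)
  also have "\<dots> = h ^ CARD('n) * \<tau>"
    unfolding content_Pair using assms
  proof (subst content_cbox_cart)
    have "?lo \<in> cbox ?lo ?hi"
      using assms by (auto simp: mem_box_cart algebra_simps)
    then show "cbox ?lo ?hi \<noteq> {}" by blast
  qed (auto simp: algebra_simps)
  finally show ?thesis .
qed

lemma mesh_pos: "h > 0 \<Longrightarrow> \<tau> > 0 \<Longrightarrow> mesh h \<tau> d > 0"
  by (auto simp: mesh_def split: option.splits)

lemma mem_cell_index: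
  assumes "h > 0" "\<tau> > 0" and pos: "\<And>d. st_coord a p d > 0"
  shows "p \<in> cell a h \<tau> (cell_index a h \<tau> p)"
  unfolding cell_def
proof (intro CollectI allI)
  fix d
  let ?x = "st_coord a p d" and ?s = "mesh h \<tau> d"
  have s: "?s > 0" using mesh_pos assms by blast
  have "\<lceil>?x / ?s\<rceil> \<ge> 1" using s pos[of d] by simp
  then have idx: "real (cell_index a h \<tau> p d) = of_int \<lceil>?x / ?s\<rceil> - 1"
    unfolding cell_index_def by simp
  have "of_int \<lceil>?x / ?s\<rceil> - 1 < ?x / ?s"
    by linarith
  then have "(of_int \<lceil>?x / ?s\<rceil> - 1) * ?s < ?x"
    using s by (simp add: less_divide_eq)
  moreover have "?x / ?s \<le> of_int \<lceil>?x / ?s\<rceil>"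
    by (rule le_of_int_ceiling)
  then have "?x / ?s * ?s \<le> of_int \<lceil>?x / ?s\<rceil> * ?s"
    using s by (intro mult_right_mono) auto
  then have "?x \<le> of_int \<lceil>?x / ?s\<rceil> * ?s"
    using s by simp
  ultimately show "real (cell_index a h \<tau> p d) * ?s < ?x \<and> ?x \<le> (real (cell_index a h \<tau> p d) + 1) * ?s"
    unfolding idx by (simp add: algebra_simps)
qed

lemma cell_index_le:
  assumes "h > 0" "\<tau> > 0" "st_coord a p d \<le> real n * mesh h \<tau> d"
  shows "cell_index a h \<tau> p d \<le> n - 1"
proof -
  have "st_coord a p d / mesh h \<tau> d \<le> real n"
    using assms(3) mesh_pos[OF assms(1,2), of d] by (simp add: pos_divide_le_eq)
  then have "\<lceil>st_coord a p d / mesh h \<tau> d\<rceil> \<le> int n"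
    by (simp add: ceiling_le_iff)
  then show ?thesis unfolding cell_index_def by linarith
qed

lemma cell_index_mono:
  assumes "h > 0" "\<tau> > 0" "st_less p p'"
  shows "cell_index a h \<tau> p \<le> cell_index a h \<tau> p'"
proof (rule le_funI)
  fix d
  have "st_coord a p d \<le> st_coord a p' d"
    using assms(3) by (auto simp: st_coord_def st_less_def vlt_def less_imp_le split: option.splits)
  then have "\<lceil>st_coord a p d / mesh h \<tau> d\<rceil> \<le> \<lceil>st_coord a p' d / mesh h \<tau> d\<rceil>"
    using mesh_pos[OF assms(1,2), of d] by (intro ceiling_mono divide_right_mono) auto
  then show "cell_index a h \<tau> p d \<le> cell_index a h \<tau> p' d"
    unfolding cell_index_def by linarith
qed

section \<open>Monotone lattice paths\<close>

definition univ_list :: "'d::finite list" where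
  "univ_list = (SOME xs. distinct xs \<and> set xs = UNIV)"

lemma univ_list_enumerates: "distinct (univ_list :: 'd::finite list) \<and> set (univ_list :: 'd list) = UNIV"
  unfolding univ_list_def by (rule someI_ex) (use finite_distinct_list[of "UNIV :: 'd set"] in auto)

text \<open>A word \<open>w\<close> over the directions encodes the lattice path that starts at \<open>a\<close> and makes
  its \<open>j\<close>-th unit step in direction \<open>w ! j\<close>.\<close>

definition path_point :: "('d \<Rightarrow> nat) \<Rightarrow> 'd list \<Rightarrow> nat \<Rightarrow> 'd \<Rightarrow> nat" where
  "path_point a w j = (\<lambda>x. a x + count_list (take j w) x)"

definition path_steps :: "('d::finite \<Rightarrow> nat) \<Rightarrow> ('d \<Rightarrow> nat) \<Rightarrow> 'd list" where
  "path_steps a b = concat (map (\<lambda>d. replicate (b d - a d) d) univ_list)"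

lemma count_list_path_steps: "count_list (path_steps a b) x = b x - a x"
proof -
  have replicate: "count_list (replicate n d) x = (if d = x then n else 0)" for n d
    by (induction n) auto
  have "count_list (path_steps a b) x = sum_list (map (\<lambda>d. if d = x then b d - a d else 0) univ_list)"
    unfolding path_steps_def count_list_concat by (simp add: replicate comp_def)
  also have "\<dots> = (\<Sum>d\<in>UNIV. if d = x then b d - a d else 0)"
    using univ_list_enumerates by (subst sum_list_distinct_conv_sum_set) auto
  finally show ?thesis by simp
qed

lemma sorted_list_on_lattice_path:
  fixes I :: "('d::finite \<Rightarrow> nat) list"
  assumes "sorted_wrt (\<le>) I" "\<forall>b\<in>set I. a \<le> b \<and> b \<le> bound" "a \<le> bound"
  shows "\<exists>w. (\<forall>b\<in>set I. \<exists>j\<le>length w. path_point a w j = b) \<and> (\<forall>x. a x + count_list w x \<le> bound x)"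
  using assms
proof (induction I arbitrary: a)
  case Nil
  then show ?case by (intro exI[of _ "[]"]) (auto simp: le_fun_def)
next
  case (Cons b I)
  then have "a \<le> b" "b \<le> bound" "sorted_wrt (\<le>) I" "\<forall>c\<in>set I. b \<le> c \<and> c \<le> bound"
    by auto
  then obtain w' where w': "\<forall>c\<in>set I. \<exists>j\<le>length w'. path_point b w' j = c"
      "\<forall>x. b x + count_list w' x \<le> bound x"
    using Cons.IH by blast
  have ab: "a x \<le> b x" for x
    using \<open>a \<le> b\<close> by (simp add: le_fun_def)
  define w where "w = path_steps a b @ w'"
  have shift: "path_point a w (length (path_steps a b) + j) = path_point b w' j" for j
  proof
    fix x
    show "path_point a w (length (path_steps a b) + j) x = path_point b w' j x"
      using ab[of x] unfolding path_point_def w_def by (simp add: count_list_path_steps)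
  qed
  show ?case
  proof (intro exI[of _ w] conjI ballI allI)
    fix c assume "c \<in> set (b # I)"
    then consider "c = b" | "c \<in> set I" by auto
    then show "\<exists>j\<le>length w. path_point a w j = c"
    proof cases
      case 1
      then show ?thesis
        using shift[of 0] by (intro exI[of _ "length (path_steps a b)"]) (auto simp: w_def path_point_def)
    next
      case 2
      then obtain j where "j \<le> length w'" "path_point b w' j = c" using w'(1) by blast
      then show ?thesis
        using shift by (intro exI[of _ "length (path_steps a b) + j"]) (auto simp: w_def)
    qed
  next
    fix x
    show "a x + count_list w x \<le> bound x"
      using w'(2) ab[of x] unfolding w_def by (simp add: count_list_path_steps)
  qed
qed

definition path_region :: "real \<Rightarrow> real \<Rightarrow> real \<Rightarrow> 'n option list \<Rightarrow> ((real^'n) \<times> real) set" where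
  "path_region a h \<tau> w = (\<Union>j\<in>{..length w}. cell a h \<tau> (path_point (\<lambda>_. 0) w j))"

lemma path_region_sets: "path_region a h \<tau> (w :: 'n::finite option list) \<in> sets lborel"
  unfolding path_region_def by (intro sets.finite_UN cell_sets) auto

lemma path_region_bounded: "bounded (path_region a h \<tau> (w :: 'n::finite option list))"
  unfolding path_region_def by (rule bounded_UN) (auto intro: cell_bounded)

lemma path_region_subset_upper_half:
  "\<tau> > 0 \<Longrightarrow> path_region a h \<tau> (w :: 'n::finite option list) \<subseteq> UNIV \<times> {0<..}"
  unfolding path_region_def using cell_subset_upper_half by blast

lemma measure_path_region_le:
  fixes w :: "'n::finite option list"
  assumes "h \<ge> 0" "\<tau> \<ge> 0"
  shows "measure lborel (path_region a h \<tau> w) \<le> (real (length w) + 1) * (h ^ CARD('n) * \<tau>)"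
proof -
  have "measure lborel (path_region a h \<tau> w)
      \<le> (\<Sum>j\<le>length w. measure lborel (cell a h \<tau> (path_point (\<lambda>_. 0) w j)))"
    unfolding path_region_def by (intro measure_UNION_le cell_sets) auto
  also have "\<dots> \<le> (\<Sum>j\<le>length w. h ^ CARD('n) * \<tau>)"
    by (intro sum_mono measure_cell_le assms)
  also have "\<dots> = (real (length w) + 1) * (h ^ CARD('n) * \<tau>)"
    by simp
  finally show ?thesis .
qed

lemma sorted_wrt_irrefl_imp_distinct: "sorted_wrt R xs \<Longrightarrow> (\<And>x. \<not> R x x) \<Longrightarrow> distinct xs"
  by (induction xs) auto

text \<open>The cells met by an increasing chain have coordinatewise increasing indices, so they
  all lie on one monotone lattice path through the grid.\<close>

lemma chain_subset_path_region:
  fixes c :: "((real^'n::finite) \<times> real) list"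
  assumes h: "h > 0" "\<tau> > 0" and sorted: "sorted_wrt st_less c"
    and inside: "\<forall>p\<in>set c. \<forall>d. 0 < st_coord a p d \<and> st_coord a p d \<le> real n * mesh h \<tau> d"
  shows "\<exists>w. length w \<le> CARD('n option) * (n - 1) \<and> set c \<subseteq> path_region a h \<tau> w"
proof -
  define I where "I = map (cell_index a h \<tau>) c"
  have "sorted_wrt (\<le>) I"
    unfolding I_def sorted_wrt_map
    by (rule sorted_wrt_mono_rel[OF _ sorted]) (use cell_index_mono[OF h] in blast)
  moreover have "\<forall>b\<in>set I. (\<lambda>_. 0) \<le> b \<and> b \<le> (\<lambda>_. n - 1)"
  proof
    fix b assume "b \<in> set I"
    then obtain p where p: "p \<in> set c" "b = cell_index a h \<tau> p"
      unfolding I_def by auto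
    have "cell_index a h \<tau> p d \<le> n - 1" for d
      using inside p(1) by (intro cell_index_le[OF h]) auto
    then show "(\<lambda>_. 0) \<le> b \<and> b \<le> (\<lambda>_. n - 1)"
      using p(2) by (auto simp: le_fun_def)
  qed
  ultimately obtain w where w: "\<forall>b\<in>set I. \<exists>j\<le>length w. path_point (\<lambda>_. 0) w j = b"
      "\<forall>x. count_list w x \<le> n - 1"
    using sorted_list_on_lattice_path[of I "\<lambda>_. 0" "\<lambda>_. n - 1"] by (auto simp: le_fun_def)
  have "length w = (\<Sum>x\<in>UNIV. count_list w x)"
    by (simp add: sum_count_set)
  also have "\<dots> \<le> CARD('n option) * (n - 1)"
    using w(2) sum_mono[of UNIV "count_list w" "\<lambda>_. n - 1"] by simp
  finally have "length w \<le> CARD('n option) * (n - 1)" .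
  moreover have "set c \<subseteq> path_region a h \<tau> w"
  proof
    fix p assume p: "p \<in> set c"
    then obtain j where j: "j \<le> length w" "path_point (\<lambda>_. 0) w j = cell_index a h \<tau> p"
      using w(1) unfolding I_def by auto
    have "p \<in> cell a h \<tau> (cell_index a h \<tau> p)"
      using mem_cell_index[OF h] inside p by blast
    then show "p \<in> path_region a h \<tau> w"
      using j unfolding path_region_def by (intro UN_I[of j]) auto
  qed
  ultimately show ?thesis by blast
qed

section \<open>Chains at a fixed scale\<close>

lemma chainH_le_if_path_regions_sparse:
  fixes P :: "((real^'n::finite) \<times> real) set" and n k :: nat
  assumes "q > 0" "t > 0" "R \<ge> 0" "n \<ge> 1"
    and fin: "\<And>B. bounded B \<Longrightarrow> finite (P \<inter> B)"
    and sparse: "\<And>w. length w \<le> (CARD('n) + 1) * n \<Longrightarrow>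
                   card (P \<inter> path_region (-R) ((q + R) / n) (t / n) w) < k"
  shows "chainH P (- (R *\<^sub>R 1)) (q *\<^sub>R 1) t \<le> ereal (real k)"
  unfolding chainH_def
proof (rule SUP_least)
  let ?h = "(q + R) / n" and ?\<tau> = "t / n"
  have h: "?h > 0" "?\<tau> > 0" and width: "real n * ?h = q + R" "real n * ?\<tau> = t"
    using assms by auto
  fix c assume "c \<in> {c. set c \<subseteq> P \<inter> {(\<eta>, s). vlt (- (R *\<^sub>R 1)) \<eta> \<and> \<eta> \<le> q *\<^sub>R 1 \<and> 0 < s \<and> s \<le> t}
                       \<and> sorted_wrt st_less c}"
  then have c: "set c \<subseteq> P" "sorted_wrt st_less c"
    and range: "\<And>p. p \<in> set c \<Longrightarrow> vlt (- (R *\<^sub>R 1)) (fst p) \<and> fst p \<le> q *\<^sub>R 1 \<and> 0 < snd p \<and> snd p \<le> t"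
    by auto
  have "0 < st_coord (-R) p d \<and> st_coord (-R) p d \<le> real n * mesh ?h ?\<tau> d" if "p \<in> set c" for p d
  proof (cases d)
    case None
    then show ?thesis using range[OF that] width by (simp add: st_coord_def mesh_def)
  next
    case (Some i)
    have "- R < fst p $ i" "fst p $ i \<le> q"
      using range[OF that] by (auto simp: vlt_def less_eq_vec_def)
    then show ?thesis using Some width by (simp add: st_coord_def mesh_def)
  qed
  then obtain w where w: "length w \<le> CARD('n option) * (n - 1)" "set c \<subseteq> path_region (-R) ?h ?\<tau> w"
    using chain_subset_path_region[OF h c(2)] by blast
  have "length w \<le> (CARD('n) + 1) * n"
    using w(1) mult_le_mono2[of "n - 1" n "CARD('n option)"] by simp
  have "distinct c"
    by (rule sorted_wrt_irrefl_imp_distinct[OF c(2)]) (simp add: st_less_def)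
  then have "length c = card (set c)"
    by (simp add: distinct_card)
  also have "\<dots> \<le> card (P \<inter> path_region (-R) ?h ?\<tau> w)"
    using c(1) w(2) by (intro card_mono fin path_region_bounded) auto
  also have "\<dots> < k"
    by (rule sparse) fact
  finally show "ereal (real (length c)) \<le> ereal (real k)" by simp
qed

lemma poisson_chainH_tail_at_scale:
  fixes N :: "'a \<Rightarrow> ((real^'n::finite) \<times> real) set" and n k :: nat
  assumes pp: "poisson_pp M N" and "q > 0" "t > 0" "R \<ge> 0" "n \<ge> 1"
  shows "\<exists>E\<in>sets M. measure M E \<le> real (\<Sum>i\<le>(CARD('n) + 1) * n. (CARD('n) + 1) ^ i) *
            (((real ((CARD('n) + 1) * n) + 1) * (((q + R) / n) ^ CARD('n) * (t / n))) ^ k / fact k)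
          \<and> (\<forall>\<omega>\<in>space M - E. chainH (N \<omega>) (- (R *\<^sub>R 1)) (q *\<^sub>R 1) t \<le> ereal (real k))"
proof -
  let ?L = "(CARD('n) + 1) * n" and ?h = "(q + R) / n" and ?\<tau> = "t / n"
  let ?U = "\<lambda>w. path_region (-R) ?h ?\<tau> (w :: 'n option list)"
  let ?bound = "((real ?L + 1) * (?h ^ CARD('n) * ?\<tau>)) ^ k / fact k"
  define W where "W = {w :: 'n option list. set w \<subseteq> UNIV \<and> length w \<le> ?L}"
  define E where "E = (\<Union>w\<in>W. {\<omega>\<in>space M. k \<le> card (N \<omega> \<inter> ?U w)})"
  have h: "?h > 0" "?\<tau> > 0"
    using assms by auto
  note region = path_region_sets path_region_bounded path_region_subset_upper_half[OF h(2)]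
  have finW: "finite W"
    unfolding W_def by (rule finite_lists_length_le) simp
  have ev: "{\<omega>\<in>space M. k \<le> card (N \<omega> \<inter> ?U w)} \<in> sets M" for w
    by (rule poisson_pp_count_event[OF pp region])
  have tail: "measure M {\<omega>\<in>space M. k \<le> card (N \<omega> \<inter> ?U w)} \<le> ?bound" if "w \<in> W" for w
  proof (rule poisson_pp_count_tail[OF pp region])
    have "measure lborel (?U w) \<le> (real (length w) + 1) * (?h ^ CARD('n) * ?\<tau>)"
      using h by (intro measure_path_region_le) auto
    also have "\<dots> \<le> (real ?L + 1) * (?h ^ CARD('n) * ?\<tau>)"
    proof (rule mult_right_mono)
      have "length w \<le> ?L"
        using that unfolding W_def by simp
      then show "real (length w) + 1 \<le> real ?L + 1"
        by linarith
      show "0 \<le> ?h ^ CARD('n) * ?\<tau>"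
        using h by (intro mult_nonneg_nonneg zero_le_power) auto
    qed
    finally show "measure lborel (?U w) \<le> (real ?L + 1) * (?h ^ CARD('n) * ?\<tau>)" .
  qed
  have "measure M E \<le> (\<Sum>w\<in>W. measure M {\<omega>\<in>space M. k \<le> card (N \<omega> \<inter> ?U w)})"
    unfolding E_def using finW ev by (intro measure_UNION_le) auto
  also have "\<dots> \<le> real (card W) * ?bound"
    using sum_mono[of W _ "\<lambda>_. ?bound", OF tail] by simp
  also have "card W = (\<Sum>i\<le>?L. (CARD('n) + 1) ^ i)"
    unfolding W_def by (subst card_lists_length_le) auto
  finally have "measure M E \<le> real (\<Sum>i\<le>?L. (CARD('n) + 1) ^ i) * ?bound" .
  moreover have "E \<in> sets M"
    unfolding E_def using finW ev by (intro sets.finite_UN) auto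
  moreover have "chainH (N \<omega>) (- (R *\<^sub>R 1)) (q *\<^sub>R 1) t \<le> ereal (real k)" if "\<omega> \<in> space M - E" for \<omega>
  proof (rule chainH_le_if_path_regions_sparse)
    show "finite (N \<omega> \<inter> B)" if "bounded B" for B
      using poisson_pp_locally_finite[OF pp _ that] \<open>\<omega> \<in> space M - E\<close> by blast
    show "card (N \<omega> \<inter> ?U w) < k" if "length w \<le> ?L" for w
      using \<open>\<omega> \<in> space M - E\<close> that unfolding E_def W_def by auto
  qed (use assms in auto)
  ultimately show ?thesis by blast
qed

lemma sum_power_le_double_power:
  fixes D :: nat
  assumes "D \<ge> 1"
  shows "(\<Sum>i\<le>L. D ^ i) \<le> (2 * D) ^ L"
proof -
  have "(\<Sum>i\<le>L. D ^ i) \<le> (\<Sum>i\<le>L. D ^ L)"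
    using assms by (intro sum_mono power_increasing) auto
  also have "\<dots> = (L + 1) * D ^ L"
    by simp
  also have "\<dots> \<le> 2 ^ L * D ^ L"
    using Suc_leI[OF less_exp[of L]] by (intro mult_right_mono) auto
  finally show ?thesis
    by (simp add: power_mult_distrib)
qed

lemma scaled_cell_volume_le:
  fixes q t :: real and m d :: nat
  assumes "m \<ge> 1" "q \<ge> 0" "t \<ge> 0"
  shows "((q + real m ^ (d + 1)) / real (m ^ d)) ^ d * (t / real (m ^ d)) \<le> (q + 1) ^ d * t"
proof -
  define R where "R = real m ^ (d + 1)"
  define n where "n = real (m ^ d)"
  have R: "R \<ge> 1"
    using assms(1) unfolding R_def by (intro one_le_power) simp
  have "n ^ (d + 1) = real m ^ (d * (d + 1))"
    unfolding n_def by (simp only: of_nat_power power_mult[symmetric])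
  also have "\<dots> = R ^ d"
    unfolding R_def by (metis power_mult mult.commute)
  finally have pow: "n ^ (d + 1) = R ^ d" .
  have "((q + R) / n) ^ d * (t / n) = (q + R) ^ d * t / n ^ (d + 1)"
    by (simp add: power_divide)
  also have "\<dots> = ((q + R) / R) ^ d * t"
    using pow by (simp add: power_divide)
  also have "\<dots> \<le> (q + 1) ^ d * t"
  proof -
    have "q \<le> R * q"
      using R assms(2) mult_right_mono[of 1 R q] by simp
    then have "(q + R) / R \<le> q + 1"
      using R by (simp add: divide_le_eq algebra_simps)
    then have "((q + R) / R) ^ d \<le> (q + 1) ^ d"
      using R assms by (intro power_mono) auto
    then show ?thesis using assms by (simp add: mult_right_mono)
  qed
  finally show ?thesis unfolding R_def n_def .
qed

text \<open>Condition \<open>c_vol\<close> makes every Poisson tail at most \<open>2^-k\<close> for \<open>k = c m^d\<close>, and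
  \<open>c_count\<close> lets this beat the number of lattice paths.\<close>

lemma scale_tail_bound_le_half_power:
  fixes m d c :: nat and q t :: real
  assumes "d \<ge> 1" "m \<ge> 1" "q > 0" "t > 0"
    and c_vol: "4 * exp 1 * real (d + 1) * ((q + 1) ^ d * t) \<le> real c"
    and c_count: "2 * (2 * (d + 1)) ^ (d + 1) \<le> (2::nat) ^ c"
  shows "real (\<Sum>i\<le>(d + 1) * m ^ d. (d + 1) ^ i) *
     (((real ((d + 1) * m ^ d) + 1) * (((q + real m ^ (d + 1)) / real (m ^ d)) ^ d * (t / real (m ^ d))))
        ^ (c * m ^ d) / fact (c * m ^ d)) \<le> (1/2) ^ m"
proof -
  define n where "n = m ^ d"
  define D where "D = d + 1"
  define k where "k = c * n"
  define V where "V = ((q + real m ^ (d + 1)) / real n) ^ d * (t / real n)"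
  define \<mu> where "\<mu> = (real (D * n) + 1) * V"
  have n: "n \<ge> 1" and "m \<le> n"
    using assms power_increasing[of 1 d m] unfolding n_def by auto
  have "0 < 4 * exp 1 * real (d + 1) * ((q + 1) ^ d * t)"
    using assms by simp
  then have "0 < real c"
    using c_vol by linarith
  then have "c \<ge> 1"
    by simp
  then have k: "k \<ge> 1"
    using n unfolding k_def by simp
  have vol: "V \<le> (q + 1) ^ d * t"
    unfolding V_def n_def using assms by (intro scaled_cell_volume_le) auto
  have V: "0 \<le> V"
    unfolding V_def using assms by simp
  have "1 \<le> D * n"
    using n unfolding D_def by simp
  then have "real (D * n) + 1 \<le> 2 * real (D * n)"
    by linarith
  then have "real (D * n) + 1 \<le> 2 * real D * real n"
    by simp
  then have \<mu>: "0 \<le> \<mu>" "\<mu> \<le> 2 * real D * real n * ((q + 1) ^ d * t)"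
    unfolding \<mu>_def using V by (auto intro: mult_mono[OF _ vol])
  have "2 * exp 1 * \<mu> \<le> 2 * exp 1 * (2 * real D * real n * ((q + 1) ^ d * t))"
    using \<mu>(2) by (rule mult_left_mono) simp
  also have "\<dots> = (4 * exp 1 * real D * ((q + 1) ^ d * t)) * real n"
    by (simp add: algebra_simps)
  also have "\<dots> \<le> real c * real n"
    using c_vol unfolding D_def by (intro mult_right_mono) auto
  finally have "2 * exp 1 * \<mu> \<le> real k"
    unfolding k_def by simp
  then have tail: "\<mu> ^ k / fact k \<le> (1/2) ^ k"
    by (rule power_div_fact_le_half_power[OF \<mu>(1) k])
  have "real (\<Sum>i\<le>D * n. D ^ i) \<le> real ((2 * D) ^ (D * n))"
    using sum_power_le_double_power[of D "D * n"] unfolding D_def by (simp only: of_nat_le_iff)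
  then have "real (\<Sum>i\<le>D * n. D ^ i) * (\<mu> ^ k / fact k) \<le> real ((2 * D) ^ (D * n)) * (1/2) ^ k"
    using tail \<mu>(1) by (intro mult_mono) auto
  also have "\<dots> = (real ((2 * D) ^ D) * (1/2) ^ c) ^ n"
    unfolding k_def by (simp add: power_mult power_mult_distrib)
  also have "\<dots> \<le> (1/2) ^ n"
  proof (rule power_mono)
    have "2 * real ((2 * D) ^ D) \<le> real ((2::nat) ^ c)"
      using c_count unfolding D_def by (simp only: of_nat_le_iff of_nat_mult[symmetric] of_nat_numeral)
    then show "real ((2 * D) ^ D) * (1/2) ^ c \<le> 1/2"
      by (simp add: power_one_over field_simps)
  qed simp
  also have "\<dots> \<le> (1/2) ^ m"
    using \<open>m \<le> n\<close> by (rule power_decreasing) auto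
  finally show ?thesis
    unfolding \<mu>_def V_def D_def k_def n_def .
qed

section \<open>All scales at once\<close>

lemma (in prob_space) prob_UN_le_geometric:
  assumes "\<And>j. F j \<in> events" "\<And>j. prob (F j) \<le> C * (1/2) ^ j"
  shows "prob (\<Union>j. F j) \<le> 2 * C"
proof -
  have geom: "summable (\<lambda>j. C * (1/2::real) ^ j)"
    by (intro summable_mult summable_geometric) simp
  have sF: "summable (\<lambda>j. prob (F j))"
    by (rule summable_comparison_test[OF _ geom]) (use assms in auto)
  have "prob (\<Union>j. F j) \<le> (\<Sum>j. prob (F j))"
    using assms(1) sF by (intro finite_measure_subadditive_countably) auto
  also have "\<dots> \<le> (\<Sum>j. C * (1/2::real) ^ j)"
    by (rule suminf_le[OF _ sF geom]) (use assms in auto)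
  also have "\<dots> = 2 * C"
    by (subst suminf_mult) (auto simp: suminf_geometric)
  finally show ?thesis .
qed

lemma (in prob_space) prob_eventually_good_ge:
  assumes bad: "\<And>m. m \<ge> 1 \<Longrightarrow> \<exists>E\<in>events. prob E \<le> (1/2) ^ m \<and> (\<forall>\<omega>\<in>space M - E. Q m \<omega>)"
    and "\<epsilon> > 0"
  obtains m0 A where "m0 \<ge> 1" "A \<in> events" "prob A \<ge> 1 - \<epsilon>"
    "\<And>\<omega> m. \<omega> \<in> A \<Longrightarrow> m0 \<le> m \<Longrightarrow> Q m \<omega>"
proof -
  obtain E where E: "\<And>m. m \<ge> 1 \<Longrightarrow> E m \<in> events \<and> prob (E m) \<le> (1/2) ^ m \<and> (\<forall>\<omega>\<in>space M - E m. Q m \<omega>)"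
    using bad by metis
  obtain m0 :: nat where m0: "m0 \<ge> 1" "(1/2::real) ^ m0 \<le> \<epsilon> / 2"
  proof -
    obtain m1 where "(1/2::real) ^ m1 < \<epsilon> / 2"
      using real_arch_pow_inv[of "\<epsilon> / 2" "1/2"] assms(2) by auto
    moreover have "(1/2::real) ^ max m1 1 \<le> (1/2) ^ m1"
      by (rule power_decreasing) auto
    ultimately have "(1/2::real) ^ max m1 1 \<le> \<epsilon> / 2"
      by linarith
    with that[of "max m1 1"] show thesis
      by simp
  qed
  define F where "F j = E (j + m0)" for j
  have F: "F j \<in> events" "prob (F j) \<le> (1/2) ^ m0 * (1/2) ^ j" for j
    using E[of "j + m0"] m0(1) by (auto simp: F_def power_add mult.commute)
  have "prob (\<Union>j. F j) \<le> 2 * (1/2) ^ m0"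
    using F by (rule prob_UN_le_geometric)
  then have "prob (\<Union>j. F j) \<le> \<epsilon>"
    using m0(2) by simp
  moreover have U: "(\<Union>j. F j) \<in> events"
    using F(1) by auto
  ultimately have "prob (space M - (\<Union>j. F j)) \<ge> 1 - \<epsilon>"
    by (simp add: prob_compl)
  moreover have "Q m \<omega>" if "\<omega> \<in> space M - (\<Union>j. F j)" "m0 \<le> m" for \<omega> m
  proof -
    have "\<omega> \<notin> E ((m - m0) + m0)"
      using that(1) unfolding F_def by blast
    then show ?thesis
      using that E[of m] m0(1) by auto
  qed
  moreover have "space M - (\<Union>j. F j) \<in> events"
    using U by auto
  ultimately show thesis
    using m0(1) by (intro that[of m0 "space M - (\<Union>j. F j)"]) auto
qed

lemma poisson_chainH_scale_bound:
  fixes N :: "'a \<Rightarrow> ((real^'n::finite) \<times> real) set"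
  assumes pp: "poisson_pp M N" and "q > 0" "t > 0"
  obtains c :: nat where "\<And>m. m \<ge> 1 \<Longrightarrow> \<exists>E\<in>sets M. measure M E \<le> (1/2) ^ m \<and>
     (\<forall>\<omega>\<in>space M - E. chainH (N \<omega>) (- ((real m ^ (CARD('n) + 1)) *\<^sub>R 1)) (q *\<^sub>R 1) t
                          \<le> ereal (real (c * m ^ CARD('n))))"
proof -
  define d where "d = CARD('n)"
  define c where "c = nat \<lceil>4 * exp 1 * real (d + 1) * ((q + 1) ^ d * t)\<rceil> + 2 * (2 * (d + 1)) ^ (d + 1)"
  have c_vol: "4 * exp 1 * real (d + 1) * ((q + 1) ^ d * t) \<le> real c"
    unfolding c_def by linarith
  have "2 * (2 * (d + 1)) ^ (d + 1) \<le> c"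
    unfolding c_def by simp
  also have "c \<le> 2 ^ c"
    using less_exp[of c] by simp
  finally have c_count: "2 * (2 * (d + 1)) ^ (d + 1) \<le> (2::nat) ^ c" .
  show thesis
  proof (rule that)
    fix m :: nat assume m: "m \<ge> 1"
    then have "m ^ d \<ge> 1" by simp
    from poisson_chainH_tail_at_scale[OF pp \<open>q > 0\<close> \<open>t > 0\<close> _ this, of "real m ^ (d + 1)" "c * m ^ d"]
    obtain E where "E \<in> sets M"
      and E: "measure M E \<le> real (\<Sum>i\<le>(d + 1) * m ^ d. (d + 1) ^ i) *
           (((real ((d + 1) * m ^ d) + 1) * (((q + real m ^ (d + 1)) / real (m ^ d)) ^ d * (t / real (m ^ d))))
              ^ (c * m ^ d) / fact (c * m ^ d))"
      and good: "\<forall>\<omega>\<in>space M - E. chainH (N \<omega>) (- ((real m ^ (d + 1)) *\<^sub>R 1)) (q *\<^sub>R 1) t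
                          \<le> ereal (real (c * m ^ d))"
      unfolding d_def by auto
    have "d \<ge> 1"
      unfolding d_def by (simp add: Suc_leI)
    from E scale_tail_bound_le_half_power[OF this m \<open>q > 0\<close> \<open>t > 0\<close> c_vol c_count]
    have "measure M E \<le> (1/2) ^ m" by linarith
    then show "\<exists>E\<in>sets M. measure M E \<le> (1/2) ^ m \<and>
       (\<forall>\<omega>\<in>space M - E. chainH (N \<omega>) (- ((real m ^ (CARD('n) + 1)) *\<^sub>R 1)) (q *\<^sub>R 1) t
                          \<le> ereal (real (c * m ^ CARD('n))))"
      using \<open>E \<in> sets M\<close> good unfolding d_def by blast
  qed
qed

definition chain_growth_bound :: "((real^'n) \<times> real) set \<Rightarrow> real \<Rightarrow> real \<Rightarrow> nat \<Rightarrow> nat \<Rightarrow> bool" where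
  "chain_growth_bound P q t c m0 \<longleftrightarrow>
     (\<forall>m\<ge>m0. chainH P (- ((real m ^ (CARD('n) + 1)) *\<^sub>R 1)) (q *\<^sub>R 1) t \<le> ereal (real (c * m ^ CARD('n))))"

lemma poisson_chain_growth_bound:
  fixes N :: "'a \<Rightarrow> ((real^'n::finite) \<times> real) set"
  assumes pp: "poisson_pp M N" and "q > 0" "t > 0" "\<epsilon> > 0"
  obtains m0 A c where "m0 \<ge> 1" "A \<in> sets M" "measure M A \<ge> 1 - \<epsilon>"
    "\<And>\<omega>. \<omega> \<in> A \<Longrightarrow> chain_growth_bound (N \<omega>) q t c m0"
proof -
  interpret prob_space M
    using pp by (rule poisson_pp_prob_space)
  obtain c where "\<And>m. m \<ge> 1 \<Longrightarrow> \<exists>E\<in>sets M. measure M E \<le> (1/2) ^ m \<and>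
     (\<forall>\<omega>\<in>space M - E. chainH (N \<omega>) (- ((real m ^ (CARD('n) + 1)) *\<^sub>R 1)) (q *\<^sub>R 1) t
                          \<le> ereal (real (c * m ^ CARD('n))))"
    using poisson_chainH_scale_bound[OF assms(1-3)] by blast
  from prob_eventually_good_ge[OF this \<open>\<epsilon> > 0\<close>] obtain m0 A where
    "m0 \<ge> 1" "A \<in> sets M" "measure M A \<ge> 1 - \<epsilon>"
    "\<And>\<omega> m. \<omega> \<in> A \<Longrightarrow> m0 \<le> m \<Longrightarrow> chainH (N \<omega>) (- ((real m ^ (CARD('n) + 1)) *\<^sub>R 1)) (q *\<^sub>R 1) t
                          \<le> ereal (real (c * m ^ CARD('n)))"
    by blast
  then show thesis
    by (intro that[of m0 A c]) (auto simp: chain_growth_bound_def)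
qed

section \<open>Deterministic consequences\<close>

lemma linf_ge: "\<bar>y $ i\<bar> \<le> linf (y :: real^'n::finite)"
  unfolding linf_def by (rule Max_ge) auto

lemma chainH_nonneg: "0 \<le> chainH P y x t"
  unfolding chainH_def by (rule SUP_upper2[where i="[]"]) (auto simp: zero_ereal_def)

lemma chainH_mono:
  fixes y y' x x' :: "real^'n::finite"
  assumes "y' \<le> y" "x \<le> x'" "s \<le> s'"
  shows "chainH P y x s \<le> chainH P y' x' s'"
  unfolding chainH_def
proof (rule SUP_subset_mono)
  have vlt: "\<And>\<eta>. vlt y \<eta> \<Longrightarrow> vlt y' \<eta>"
    using assms(1) unfolding vlt_def less_eq_vec_def by (meson order_le_less_trans)
  have le: "\<And>\<eta>. \<eta> \<le> x \<Longrightarrow> \<eta> \<le> x'"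
    using assms(2) by (meson order_trans)
  show "{c. set c \<subseteq> P \<inter> {(\<eta>, r). vlt y \<eta> \<and> \<eta> \<le> x \<and> 0 < r \<and> r \<le> s} \<and> sorted_wrt st_less c}
    \<subseteq> {c. set c \<subseteq> P \<inter> {(\<eta>, r). vlt y' \<eta> \<and> \<eta> \<le> x' \<and> 0 < r \<and> r \<le> s'} \<and> sorted_wrt st_less c}"
    using vlt le assms(3) by fastforce
qed simp

lemma neg_scaleR_one_le_if_linf_le:
  fixes z :: "real^'n::finite"
  assumes "linf z \<le> r"
  shows "- (r *\<^sub>R 1) \<le> z"
  unfolding less_eq_vec_def
proof
  fix i
  have "\<bar>z $ i\<bar> \<le> r"
    using linf_ge[of z i] assms by linarith
  then show "(- (r *\<^sub>R 1)) $ i \<le> z $ i"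
    by simp
qed

lemma chainH_finite_if_chain_growth_bound:
  fixes z :: "real^'n::finite"
  assumes "chain_growth_bound P q t c m0"
  shows "chainH P z (q *\<^sub>R 1) t \<noteq> \<infinity>"
proof -
  define m where "m = max (max m0 1) (nat \<lceil>linf z\<rceil>)"
  have "real m \<ge> 1"
    unfolding m_def by auto
  have "linf z \<le> real m"
    unfolding m_def by linarith
  also have "\<dots> \<le> real m ^ (CARD('n) + 1)"
    using power_increasing[of 1 "CARD('n) + 1" "real m"] \<open>real m \<ge> 1\<close> by simp
  finally have "- ((real m ^ (CARD('n) + 1)) *\<^sub>R 1) \<le> z"
    by (rule neg_scaleR_one_le_if_linf_le)
  then have "chainH P z (q *\<^sub>R 1) t \<le> chainH P (- ((real m ^ (CARD('n) + 1)) *\<^sub>R 1)) (q *\<^sub>R 1) t"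
    by (rule chainH_mono) auto
  also have "\<dots> \<le> ereal (real (c * m ^ CARD('n)))"
    using assms unfolding chain_growth_bound_def m_def by auto
  finally show ?thesis by auto
qed

text \<open>Interpolation between scales: for \<open>m = \<lceil>linf z ^ (1/(d+1))\<rceil>\<close> the point \<open>z\<close> lies above
  the corner \<open>-m^(d+1) 1\<close>, and \<open>m \<le> 2 linf z ^ (1/(d+1))\<close>.\<close>

lemma chainH_le_if_chain_growth_bound:
  fixes z :: "real^'n::finite"
  assumes good: "chain_growth_bound P q t c m0" and "m0 \<ge> 1"
    and far: "real m0 ^ (CARD('n) + 1) < linf z"
  shows "chainH P z (q *\<^sub>R 1) t
           \<le> ereal (real c * 2 ^ CARD('n) * linf z powr (real CARD('n) / (real CARD('n) + 1)))"
proof -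
  define d where "d = CARD('n)"
  define \<rho> where "\<rho> = linf z powr (1 / real (d + 1))"
  define m where "m = nat \<lceil>\<rho>\<rceil>"
  have "linf z > 0"
    using far by (smt (verit) zero_le_power of_nat_0_le_iff)
  then have "\<rho> > 0"
    unfolding \<rho>_def by simp
  have \<rho>_pow: "\<rho> ^ k = linf z powr (real k / real (d + 1))" for k
  proof -
    have "\<rho> ^ k = \<rho> powr real k"
      using \<open>\<rho> > 0\<close> by (simp add: powr_realpow)
    also have "\<dots> = linf z powr (real k / real (d + 1))"
      unfolding \<rho>_def by (simp add: powr_powr)
    finally show ?thesis .
  qed
  have "real m0 ^ (d + 1) < \<rho> ^ (d + 1)"
    using far \<rho>_pow[of "d + 1"] \<open>linf z > 0\<close> unfolding d_def by simp
  then have "real m0 < \<rho>"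
    by (rule power_less_imp_less_base) (simp add: \<rho>_def)
  then have \<rho>: "1 < \<rho>" "m0 \<le> m" "\<rho> \<le> real m" "real m \<le> 2 * \<rho>"
    using \<open>m0 \<ge> 1\<close> unfolding m_def by linarith+
  have "linf z \<le> real m ^ (d + 1)"
    using \<rho>_pow[of "d + 1"] \<rho> \<open>linf z > 0\<close> power_mono[of \<rho> "real m" "d + 1"] by simp
  then have "- ((real m ^ (d + 1)) *\<^sub>R 1) \<le> z"
    by (rule neg_scaleR_one_le_if_linf_le)
  then have "chainH P z (q *\<^sub>R 1) t \<le> chainH P (- ((real m ^ (d + 1)) *\<^sub>R 1)) (q *\<^sub>R 1) t"
    by (rule chainH_mono) auto
  also have "\<dots> \<le> ereal (real c * real m ^ d)"
    using good \<rho>(2) unfolding chain_growth_bound_def d_def by auto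
  also have "real m ^ d \<le> 2 ^ d * linf z powr (real d / (real d + 1))"
    using power_mono[OF \<rho>(4), of d] \<rho>(1) \<rho>_pow[of d, unfolded of_nat_add of_nat_1]
    by (simp add: power_mult_distrib)
  then have "ereal (real c * real m ^ d) \<le> ereal (real c * 2 ^ d * linf z powr (real d / (real d + 1)))"
    by (simp add: mult.assoc mult_left_mono)
  finally show ?thesis
    unfolding d_def .
qed

lemma in_Sigma_mono: "in_Sigma \<sigma> \<Longrightarrow> x \<le> y \<Longrightarrow> \<sigma> x \<le> \<sigma> y"
  by (simp add: in_Sigma_def)

lemma in_Sigma_eventually_below:
  fixes \<sigma> :: "real^'n::finite \<Rightarrow> ereal" and b :: "real^'n"
  assumes "in_Sigma \<sigma>"
  obtains R0 where "\<And>z. z \<le> b \<Longrightarrow> R0 \<le> linf z \<Longrightarrow>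
           ereal (linf z powr (- real CARD('n) / (real CARD('n) + 1))) * \<sigma> z < ereal B"
proof -
  define F where "F = (\<lambda>M::real. SUP y \<in> {y. y \<le> b \<and> linf y \<ge> M}.
              ereal (linf y powr (- real CARD('n) / (real CARD('n) + 1))) * \<sigma> y)"
  have "(F \<longlongrightarrow> -\<infinity>) at_top"
    using assms[unfolded in_Sigma_def, THEN conjunct2, THEN conjunct2, THEN conjunct2, rule_format, of b]
    unfolding F_def .
  then have "eventually (\<lambda>M. F M < ereal B) at_top"
    unfolding tendsto_MInfty by blast
  then obtain R0 where R0: "\<And>M. M \<ge> R0 \<Longrightarrow> F M < ereal B"
    unfolding eventually_at_top_linorder by blast
  show thesis
  proof (rule that)
    fix z assume "z \<le> b" "R0 \<le> linf z"
    then have "ereal (linf z powr (- real CARD('n) / (real CARD('n) + 1))) * \<sigma> z \<le> F R0"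
      unfolding F_def by (intro SUP_upper) auto
    also have "\<dots> < ereal B"
      using R0 by simp
    finally show "ereal (linf z powr (- real CARD('n) / (real CARD('n) + 1))) * \<sigma> z < ereal B" .
  qed
qed

lemma partition_interval_exists:
  fixes s :: "nat \<Rightarrow> real"
  shows "s 0 \<le> x \<Longrightarrow> x < s m \<Longrightarrow> \<exists>k<m. s k \<le> x \<and> x < s (Suc k)"
proof (induction m)
  case (Suc m)
  then show ?case
    by (cases "x < s m") (auto intro: less_SucI)
qed simp

text \<open>The partition of the larger cube \<open>[-(q+1), q+1]^d\<close> is used because the half-open
  rectangles of a partition of \<open>[-q, q]^d\<close> miss its upper faces.\<close>

lemma in_Sigma_finite_image_cube:
  fixes \<sigma> :: "real^'n::finite \<Rightarrow> ereal"
  assumes "in_Sigma \<sigma>" "q > 0"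
  shows "finite (\<sigma> ` {- (q *\<^sub>R 1) .. q *\<^sub>R 1})"
proof -
  have "q + 1 > 0"
    using assms(2) by simp
  then obtain s :: "'n \<Rightarrow> nat \<Rightarrow> real" and m :: "'n \<Rightarrow> nat" where
    s: "\<forall>i. s i 0 = -(q + 1) \<and> s i (m i) = q + 1 \<and> (\<forall>k < m i. s i k < s i (Suc k))"
    and const: "\<forall>kk :: 'n \<Rightarrow> nat. (\<forall>i. kk i < m i) \<longrightarrow>
              (\<forall>x y. (\<forall>i. s i (kk i) \<le> x $ i \<and> x $ i < s i (Suc (kk i))) \<longrightarrow>
                     (\<forall>i. s i (kk i) \<le> y $ i \<and> y $ i < s i (Suc (kk i))) \<longrightarrow> \<sigma> x = \<sigma> y)"
    using assms(1)[unfolded in_Sigma_def, THEN conjunct2, THEN conjunct2, THEN conjunct1] by blast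
  define corner where "corner kk = (\<chi> i. s i (kk i))" for kk :: "'n \<Rightarrow> nat"
  have "\<sigma> x \<in> (\<lambda>kk. \<sigma> (corner kk)) ` Pi UNIV (\<lambda>i. {..<m i})"
    if "- (q *\<^sub>R 1) \<le> x" "x \<le> q *\<^sub>R 1" for x
  proof -
    have "\<forall>i. \<exists>k<m i. s i k \<le> x $ i \<and> x $ i < s i (Suc k)"
    proof
      fix i
      have "s i 0 \<le> x $ i" "x $ i < s i (m i)"
        using that s by (auto simp: less_eq_vec_def dest!: spec[of _ i])
      then show "\<exists>k<m i. s i k \<le> x $ i \<and> x $ i < s i (Suc k)"
        by (rule partition_interval_exists)
    qed
    then obtain kk where kk: "\<forall>i. kk i < m i \<and> s i (kk i) \<le> x $ i \<and> x $ i < s i (Suc (kk i))"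
      using choice[of "\<lambda>i k. k < m i \<and> s i k \<le> x $ i \<and> x $ i < s i (Suc k)"] by blast
    then have "\<sigma> x = \<sigma> (corner kk)"
      using s const unfolding corner_def by (intro const[rule_format]) auto
    then show ?thesis
      using kk by auto
  qed
  then have "\<sigma> ` {- (q *\<^sub>R 1) .. q *\<^sub>R 1} \<subseteq> (\<lambda>kk. \<sigma> (corner kk)) ` Pi UNIV (\<lambda>i. {..<m i})"
    by auto
  moreover have "finite (Pi UNIV (\<lambda>i. {..<m i}) :: ('n \<Rightarrow> nat) set)"
    using finite_PiE[of UNIV "\<lambda>i. {..<m i}"] by (simp add: PiE_UNIV_domain)
  ultimately show ?thesis
    by (rule finite_subset[OF _ finite_imageI])
qed

lemma in_Sigma_bounded_below_on_cube:
  fixes \<sigma> :: "real^'n::finite \<Rightarrow> ereal"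
  assumes "in_Sigma \<sigma>" "q > 0"
  obtains b :: real where
    "\<And>x. - (q *\<^sub>R 1) \<le> x \<Longrightarrow> x \<le> q *\<^sub>R 1 \<Longrightarrow> \<bar>\<sigma> x\<bar> \<noteq> \<infinity> \<Longrightarrow> ereal b \<le> \<sigma> x"
proof
  let ?V = "real_of_ereal ` \<sigma> ` {- (q *\<^sub>R 1) .. q *\<^sub>R 1}"
  fix x assume "- (q *\<^sub>R 1) \<le> x" "x \<le> q *\<^sub>R 1" "\<bar>\<sigma> x\<bar> \<noteq> \<infinity>"
  then have "Min ?V \<le> real_of_ereal (\<sigma> x)"
    using in_Sigma_finite_image_cube[OF assms] by (intro Min_le) auto
  then show "ereal (Min ?V) \<le> \<sigma> x"
    using \<open>\<bar>\<sigma> x\<bar> \<noteq> \<infinity>\<close> by (cases "\<sigma> x") auto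
qed

lemma ereal_le_of_powr_mult_less:
  fixes r a c :: real and v :: ereal
  assumes "r > 0" "ereal (r powr (- a)) * v < ereal c"
  shows "v \<le> ereal (c * r powr a)"
proof (cases v)
  case (real x)
  have "r powr (- a) * x < c"
    using assms(2) real by simp
  then have "(r powr (- a) * x) * r powr a \<le> c * r powr a"
    using assms(1) by (intro mult_right_mono) auto
  then show ?thesis
    using real assms(1) by (simp add: powr_minus field_simps)
qed (use assms in auto)

lemma in_Sigma_dominates_chain_growth:
  fixes \<sigma> :: "real^'n::finite \<Rightarrow> ereal"
  assumes sig: "in_Sigma \<sigma>" and "m0 \<ge> 1"
  obtains R where "R \<ge> 0"
    "\<And>(P :: ((real^'n) \<times> real) set) z. chain_growth_bound P q t c m0 \<Longrightarrow> z \<le> q *\<^sub>R 1 \<Longrightarrow>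
       R < linf z \<Longrightarrow> \<sigma> z + chainH P z (q *\<^sub>R 1) t \<le> ereal b"
proof -
  define \<alpha> where "\<alpha> = real CARD('n) / (real CARD('n) + 1)"
  define C where "C = real c * 2 ^ CARD('n)"
  obtain R0 where R0: "\<And>z. z \<le> q *\<^sub>R 1 \<Longrightarrow> R0 \<le> linf z \<Longrightarrow>
      ereal (linf z powr (- \<alpha>)) * \<sigma> z < ereal (- (C + \<bar>b\<bar> + 1))"
    using in_Sigma_eventually_below[OF sig, of "q *\<^sub>R 1" "- (C + \<bar>b\<bar> + 1)"]
    unfolding \<alpha>_def by (metis minus_divide_left)
  define R where "R = max (max R0 (real m0 ^ (CARD('n) + 1))) 1"
  show thesis
  proof (rule that[of R])
    show "R \<ge> 0"
      unfolding R_def by auto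
    fix P :: "((real^'n) \<times> real) set" and z :: "real^'n"
    assume good: "chain_growth_bound P q t c m0" and "z \<le> q *\<^sub>R 1" "R < linf z"
    then have r: "1 < linf z" "R0 \<le> linf z" "real m0 ^ (CARD('n) + 1) < linf z"
      unfolding R_def by auto
    have "\<sigma> z \<le> ereal (- (C + \<bar>b\<bar> + 1) * linf z powr \<alpha>)"
      using r R0[OF \<open>z \<le> q *\<^sub>R 1\<close>] by (intro ereal_le_of_powr_mult_less) auto
    moreover have "chainH P z (q *\<^sub>R 1) t \<le> ereal (C * linf z powr \<alpha>)"
      using chainH_le_if_chain_growth_bound[OF good \<open>m0 \<ge> 1\<close> r(3)] unfolding C_def \<alpha>_def .
    ultimately have "\<sigma> z + chainH P z (q *\<^sub>R 1) t
        \<le> ereal (- (C + \<bar>b\<bar> + 1) * linf z powr \<alpha>) + ereal (C * linf z powr \<alpha>)"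
      by (rule add_mono)
    also have "\<dots> = ereal (- (\<bar>b\<bar> + 1) * linf z powr \<alpha>)"
      by (simp add: algebra_simps)
    also have "\<dots> \<le> ereal b"
    proof -
      have "1 \<le> linf z powr \<alpha>"
        using r(1) unfolding \<alpha>_def by (intro ge_one_powr_ge_zero) auto
      then have "\<bar>b\<bar> + 1 \<le> (\<bar>b\<bar> + 1) * linf z powr \<alpha>"
        by (simp add: mult_le_cancel_left1)
      then have "- (\<bar>b\<bar> + 1) * linf z powr \<alpha> \<le> - (\<bar>b\<bar> + 1)"
        by (simp only: mult_minus_left neg_le_iff_le)
      also have "\<dots> \<le> b"
        by simp
      finally show ?thesis
        by simp
    qed
    finally show "\<sigma> z + chainH P z (q *\<^sub>R 1) t \<le> ereal b" .
  qed
qed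

lemma evolve_ge: "\<sigma> x \<le> evolve \<sigma> P s x"
proof (cases "s = 0")
  case False
  have "\<sigma> x \<le> \<sigma> x + chainH P x x s"
    by (rule add_increasing2[OF chainH_nonneg]) simp
  also have "\<dots> \<le> (SUP y\<in>{y. y \<le> x}. \<sigma> y + chainH P y x s)"
    by (rule SUP_upper) simp
  also have "\<dots> = evolve \<sigma> P s x"
    using False by (simp add: evolve_def)
  finally show ?thesis .
qed (simp add: evolve_def)

lemma evolve_le_SUP_chainH:
  assumes "y \<le> x" "s \<le> t"
  shows "evolve \<sigma> P s y \<le> (SUP z\<in>{z. z \<le> y}. \<sigma> z + chainH P z x t)"
proof (cases "s = 0")
  case True
  have "\<sigma> y \<le> \<sigma> y + chainH P y x t"
    by (rule add_increasing2[OF chainH_nonneg]) simp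
  also have "\<dots> \<le> (SUP z\<in>{z. z \<le> y}. \<sigma> z + chainH P z x t)"
    by (rule SUP_upper) simp
  finally show ?thesis
    using True by (simp add: evolve_def)
next
  case False
  have "chainH P z y s \<le> chainH P z x t" for z
    using assms by (intro chainH_mono) auto
  then have "(SUP z\<in>{z. z \<le> y}. \<sigma> z + chainH P z y s) \<le> (SUP z\<in>{z. z \<le> y}. \<sigma> z + chainH P z x t)"
    by (intro SUP_mono') (rule add_left_mono)
  then show ?thesis
    using False by (simp add: evolve_def)
qed

lemma evolve_finite_imp_finite:
  assumes sig: "in_Sigma \<sigma>" and fin: "\<And>z. chainH P z x s \<noteq> \<infinity>"
    and ev: "\<bar>evolve \<sigma> P s x\<bar> \<noteq> \<infinity>"
  shows "\<bar>\<sigma> x\<bar> \<noteq> \<infinity>"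
proof -
  have "\<sigma> x \<noteq> \<infinity>"
    using evolve_ge[of \<sigma> x P s] ev by auto
  moreover have "\<sigma> x \<noteq> -\<infinity>"
  proof
    assume "\<sigma> x = -\<infinity>"
    then have minf: "\<sigma> z + chainH P z x s = -\<infinity>" if "z \<le> x" for z
      using in_Sigma_mono[OF sig that] fin[of z] by (cases "chainH P z x s") auto
    have "evolve \<sigma> P s x \<le> -\<infinity>"
    proof (cases "s = 0")
      case False
      show ?thesis
        unfolding evolve_def if_not_P[OF False] by (rule SUP_least) (use minf in auto)
    qed (use \<open>\<sigma> x = -\<infinity>\<close> in \<open>simp add: evolve_def\<close>)
    then show False
      using ev by auto
  qed
  ultimately show ?thesis by auto
qed

lemma evolve_le_if_beyond:
  assumes far: "\<And>z. z \<le> x \<Longrightarrow> R < linf z \<Longrightarrow> \<sigma> z + chainH P z x t \<le> ereal v"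
    and "y \<le> x" "y $ i < - R" "s \<le> t"
  shows "evolve \<sigma> P s y \<le> ereal v"
proof -
  have "evolve \<sigma> P s y \<le> (SUP z\<in>{z. z \<le> y}. \<sigma> z + chainH P z x t)"
    by (rule evolve_le_SUP_chainH[OF \<open>y \<le> x\<close> \<open>s \<le> t\<close>])
  also have "\<dots> \<le> ereal v"
  proof (rule SUP_least, rule far)
    fix z assume "z \<in> {z. z \<le> y}"
    then have "z \<le> y" by simp
    then show "z \<le> x"
      using \<open>y \<le> x\<close> by (rule order_trans)
    have "z $ i \<le> y $ i"
      using \<open>z \<le> y\<close> by (simp add: less_eq_vec_def)
    then show "R < linf z"
      using \<open>y $ i < - R\<close> linf_ge[of z i] by linarith
  qed
  finally show ?thesis .
qed

text \<open>A point \<open>y\<close> of \<open>S\<^sub>K\<close> has the same finite height as some point of \<open>K\<close>, hence a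
  height at least \<open>b\<close>, while beyond \<open>-R\<close> all heights are at most \<open>b - 1\<close>.\<close>

lemma S_set_evolve_subset:
  fixes \<sigma> :: "real^'n::finite \<Rightarrow> ereal"
  assumes sig: "in_Sigma \<sigma>"
    and lower: "\<And>x. - (q *\<^sub>R 1) \<le> x \<Longrightarrow> x \<le> q *\<^sub>R 1 \<Longrightarrow> \<bar>\<sigma> x\<bar> \<noteq> \<infinity> \<Longrightarrow> ereal b \<le> \<sigma> x"
    and fin: "\<And>z. chainH P z (q *\<^sub>R 1) t \<noteq> \<infinity>"
    and far: "\<And>z. z \<le> q *\<^sub>R 1 \<Longrightarrow> R < linf z \<Longrightarrow> \<sigma> z + chainH P z (q *\<^sub>R 1) t \<le> ereal (b - 1)"
    and "s \<le> t"
  shows "S_set (evolve \<sigma> P s) {- (q *\<^sub>R 1) .. q *\<^sub>R 1} \<subseteq> {- (R *\<^sub>R 1) .. q *\<^sub>R 1}"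
proof
  let ?\<rho> = "evolve \<sigma> P s"
  fix y assume "y \<in> S_set ?\<rho> {- (q *\<^sub>R 1) .. q *\<^sub>R 1}"
  then obtain x where x: "- (q *\<^sub>R 1) \<le> x" "x \<le> q *\<^sub>R 1" and "y \<in> S_pt ?\<rho> x"
    unfolding S_set_def by auto
  then have "\<bar>?\<rho> x\<bar> \<noteq> \<infinity>" "y \<le> x" "?\<rho> y = ?\<rho> x"
    unfolding S_pt_def by (auto split: if_splits)
  have "chainH P z x s \<noteq> \<infinity>" for z
    using fin[of z] chainH_mono[of z z x "q *\<^sub>R 1" s t P] x(2) \<open>s \<le> t\<close> by auto
  then have "\<bar>\<sigma> x\<bar> \<noteq> \<infinity>"
    by (rule evolve_finite_imp_finite[OF sig _ \<open>\<bar>?\<rho> x\<bar> \<noteq> \<infinity>\<close>])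
  then have "ereal b \<le> ?\<rho> y"
    using lower[OF x] evolve_ge[of \<sigma> x P s] \<open>?\<rho> y = ?\<rho> x\<close> by auto
  have "y \<le> q *\<^sub>R 1"
    using \<open>y \<le> x\<close> x(2) by (rule order_trans)
  show "y \<in> {- (R *\<^sub>R 1) .. q *\<^sub>R 1}"
  proof (rule ccontr)
    assume "y \<notin> {- (R *\<^sub>R 1) .. q *\<^sub>R 1}"
    then have "\<not> - (R *\<^sub>R 1) \<le> y"
      using \<open>y \<le> q *\<^sub>R 1\<close> by auto
    then obtain i where "y $ i < - R"
      unfolding less_eq_vec_def by (auto simp: not_le)
    then have "?\<rho> y \<le> ereal (b - 1)"
      using far \<open>y \<le> q *\<^sub>R 1\<close> \<open>s \<le> t\<close> by (intro evolve_le_if_beyond)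
    with \<open>ereal b \<le> ?\<rho> y\<close> have "ereal b \<le> ereal (b - 1)"
      by (rule order_trans)
    then show False
      by simp
  qed
qed

lemma chain_growth_bound_confines_S_set:
  fixes \<sigma> :: "real^'n::finite \<Rightarrow> ereal"
  assumes sig: "in_Sigma \<sigma>" and "q > 0" "m0 \<ge> 1"
  obtains R where "R \<ge> 0"
    "\<And>(P :: ((real^'n) \<times> real) set) s. chain_growth_bound P q t c m0 \<Longrightarrow> s \<in> {0..t} \<Longrightarrow>
       S_set (evolve \<sigma> P s) {- (q *\<^sub>R 1) .. q *\<^sub>R 1} \<subseteq> {- (R *\<^sub>R 1) .. q *\<^sub>R 1}"
proof -
  obtain b where lower:
    "\<And>x. - (q *\<^sub>R 1) \<le> x \<Longrightarrow> x \<le> q *\<^sub>R 1 \<Longrightarrow> \<bar>\<sigma> x\<bar> \<noteq> \<infinity> \<Longrightarrow> ereal b \<le> \<sigma> x"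
    using in_Sigma_bounded_below_on_cube[OF sig \<open>q > 0\<close>] by metis
  obtain R where "R \<ge> 0" and far: "\<And>(P :: ((real^'n) \<times> real) set) z. chain_growth_bound P q t c m0 \<Longrightarrow>
      z \<le> q *\<^sub>R 1 \<Longrightarrow> R < linf z \<Longrightarrow> \<sigma> z + chainH P z (q *\<^sub>R 1) t \<le> ereal (b - 1)"
    using in_Sigma_dominates_chain_growth[OF sig \<open>m0 \<ge> 1\<close>] by metis
  show thesis
  proof (rule that[OF \<open>R \<ge> 0\<close>])
    fix P :: "((real^'n) \<times> real) set" and s
    assume good: "chain_growth_bound P q t c m0" and "s \<in> {0..t}"
    have fin: "chainH P z (q *\<^sub>R 1) t \<noteq> \<infinity>" for z
      using good by (rule chainH_finite_if_chain_growth_bound)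
    have far_P: "\<sigma> z + chainH P z (q *\<^sub>R 1) t \<le> ereal (b - 1)" if "z \<le> q *\<^sub>R 1" "R < linf z" for z
      using far[OF good that] .
    have "s \<le> t"
      using \<open>s \<in> {0..t}\<close> by simp
    from S_set_evolve_subset[OF sig lower fin far_P this]
    show "S_set (evolve \<sigma> P s) {- (q *\<^sub>R 1) .. q *\<^sub>R 1} \<subseteq> {- (R *\<^sub>R 1) .. q *\<^sub>R 1}" .
  qed
qed

theorem corollary7p8:
  fixes M :: "'a measure"
    and N :: "'a \<Rightarrow> ((real^'n) \<times> real) set"
    and \<sigma> :: "real^'n \<Rightarrow> ereal"
    and q \<epsilon> t :: real
  assumes "CARD('n) \<ge> 2"
    and "poisson_pp M N"
    and "in_Sigma \<sigma>"
    and "q > 0" and "\<epsilon> > 0" and "t > 0"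
  shows "\<exists>(a :: real^'n) (r :: real). r \<ge> 0 \<and>
           (\<exists>A\<in>sets M. A \<subseteq> {\<omega>\<in>space M. \<forall>s\<in>{0..t}.
                  S_set (evolve \<sigma> (N \<omega>) s) {- (q *\<^sub>R 1) .. q *\<^sub>R 1} \<subseteq> {a .. a + r *\<^sub>R 1}}
              \<and> measure M A \<ge> 1 - \<epsilon>)"
proof -
  obtain m0 A c where "m0 \<ge> 1" "A \<in> sets M" "measure M A \<ge> 1 - \<epsilon>"
    and good: "\<And>\<omega>. \<omega> \<in> A \<Longrightarrow> chain_growth_bound (N \<omega>) q t c m0"
    using poisson_chain_growth_bound[OF assms(2,4,6,5)] by metis
  obtain R where "R \<ge> 0" and confined: "\<And>P s. chain_growth_bound P q t c m0 \<Longrightarrow> s \<in> {0..t} \<Longrightarrow>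
      S_set (evolve \<sigma> P s) {- (q *\<^sub>R 1) .. q *\<^sub>R 1} \<subseteq> {- (R *\<^sub>R 1) .. q *\<^sub>R 1}"
    using chain_growth_bound_confines_S_set[OF assms(3,4) \<open>m0 \<ge> 1\<close>] by metis
  have corner: "- (R *\<^sub>R 1) + (R + q) *\<^sub>R 1 = (q *\<^sub>R 1 :: real^'n)"
    by (simp add: scaleR_add_left)
  have "A \<subseteq> {\<omega>\<in>space M. \<forall>s\<in>{0..t}. S_set (evolve \<sigma> (N \<omega>) s) {- (q *\<^sub>R 1) .. q *\<^sub>R 1}
                                     \<subseteq> {- (R *\<^sub>R 1) .. - (R *\<^sub>R 1) + (R + q) *\<^sub>R 1}}"
    unfolding corner using confined good sets.sets_into_space[OF \<open>A \<in> sets M\<close>] by blast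
  moreover have "R + q \<ge> 0"
    using \<open>R \<ge> 0\<close> \<open>q > 0\<close> by simp
  ultimately show ?thesis
    using \<open>A \<in> sets M\<close> \<open>measure M A \<ge> 1 - \<epsilon>\<close>
    by (intro exI[of _ "- (R *\<^sub>R 1)"] exI[of _ "R + q"]) blast
qed

end
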